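(* Suppose that, after a permutation of its columns, $A=[A^{(1)},\dots,A^{(k)}]$ where $\mathrm{New}(A^{(1)}),\dots,\mathrm{New}(A^{(k)})$ are mutually disjoint faces of $\mathrm{New}(A)$, such that (1) whenever the extreme points of $\mathrm{New}(A^{(i)})$ are affinely independent, at most two columns of $A^{(i)}$ are non-extreme points of $\mathrm{New}(A^{(i)})$, and (2) for every other $i$, at most one column of $A^{(i)}$ is a non-extreme point of $\mathrm{New}(A^{(i)})$. Then $C_{\mathrm{SAGE}}(A)=C_{\mathrm{NNS}}(A)$.
   Context: Let $A\in\mathbb{R}^{n\times m}$ have distinct columns $a_1,\dots,a_m$. For $c\in\mathbb{R}^m$, $\mathrm{Sig}(A,c)$ denotes the function $x\mapsto\sum_{i=1}^m c_i\exp(a_i^\top x)$ on $\mathbb{R}^n$. $\mathrm{New}(A)=\mathrm{conv}\{a_1,\dots,a_m\}$ is the Newton polytope. $C_{\mathrm{NNS}}(A)=\{c\in\mathbb{R}^m:\mathrm{Sig}(A,c)(x)\ge 0\ \forall x\in\mathbb{R}^n\}$. For $k\in[m]$, the $k$-th AGE cone is $C_{\mathrm{AGE}}(A,k)=\{c\in C_{\mathrm{NNS}}(A): c_i\ge 0\ \forall i\ne k\}$, and the SAGE cone is the Minkowski sum $C_{\mathrm{SAGE}}(A)=\sum_{k=1}^m C_{\mathrm{AGE}}(A,k)$. *)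

theory Defs
  imports "HOL-Analysis.Analysis" "HOL-Library.Disjoint_Sets"
begin

text \<open>Columns of A are a :: 'm \<Rightarrow> real^'n (index type 'm finite, m = CARD('m));
  coefficient vectors c :: 'm \<Rightarrow> real.\<close>

definition Sig :: "('m \<Rightarrow> real^'n) \<Rightarrow> ('m::finite \<Rightarrow> real) \<Rightarrow> real^'n \<Rightarrow> real" where
  "Sig a c x = (\<Sum>i\<in>UNIV. c i * exp (a i \<bullet> x))"

definition New :: "('m \<Rightarrow> real^'n) \<Rightarrow> 'm set \<Rightarrow> (real^'n) set" where
  "New a B = convex hull (a ` B)"

definition C_NNS :: "('m::finite \<Rightarrow> real^'n) \<Rightarrow> ('m \<Rightarrow> real) set" where
  "C_NNS a = {c. \<forall>x. Sig a c x \<ge> 0}"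

definition C_AGE :: "('m::finite \<Rightarrow> real^'n) \<Rightarrow> 'm \<Rightarrow> ('m \<Rightarrow> real) set" where
  "C_AGE a k = {c. c \<in> C_NNS a \<and> (\<forall>i. i \<noteq> k \<longrightarrow> c i \<ge> 0)}"

definition C_SAGE :: "('m::finite \<Rightarrow> real^'n) \<Rightarrow> ('m \<Rightarrow> real) set" where
  "C_SAGE a = {c. \<exists>cs :: 'm \<Rightarrow> 'm \<Rightarrow> real.
      (\<forall>k. cs k \<in> C_AGE a k) \<and> c = (\<lambda>i. \<Sum>k\<in>UNIV. cs k i)}"

definition nonextreme_cols :: "('m \<Rightarrow> real^'n) \<Rightarrow> 'm set \<Rightarrow> 'm set" where
  "nonextreme_cols a B = {j\<in>B. \<not> (a j extreme_point_of New a B)}"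

end

theory Submission
  imports Defs
begin

text \<open>
  A nonnegative signomial stays nonnegative when restricted to the columns lying on a face of the
  Newton polytope (push x to infinity along the exposing direction), so c splits into its
  restrictions to the blocks. On a block, a negative coefficient can only sit at a column that is
  not an extreme point, so the hypotheses leave at most two negative coefficients, and with two
  the extreme points form a simplex containing both bad columns. For two, the nonnegative part must be split into two vectors dominating the two
  negative terms; if this is impossible, a hyperplane separates it from the closed convex set of
  splittable vectors, and because the simplex is affinely independent the separating functional is
  (up to an epsilon) the exponential vector at some point w, where the signomial would be negative.
\<close>

lemma Sig_add: "Sig a (\<lambda>i. c i + d i) x = Sig a c x + Sig a d x"
  by (simp add: Sig_def distrib_right sum.distrib)

lemma Sig_eq_sum_support:
  fixes a :: "'m::finite \<Rightarrow> real^'n"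
  assumes "\<And>i. i \<notin> W \<Longrightarrow> c i = 0"
  shows "Sig a c x = (\<Sum>i\<in>W. c i * exp (a i \<bullet> x))"
  unfolding Sig_def by (rule sum.mono_neutral_right) (use assms in auto)

lemma C_NNS_add: "c \<in> C_NNS a \<Longrightarrow> d \<in> C_NNS a \<Longrightarrow> (\<lambda>i. c i + d i) \<in> C_NNS a"
  by (simp add: C_NNS_def Sig_add)

lemma C_AGE_add: "c \<in> C_AGE a k \<Longrightarrow> d \<in> C_AGE a k \<Longrightarrow> (\<lambda>i. c i + d i) \<in> C_AGE a k"
  by (simp add: C_AGE_def C_NNS_add)

lemma zero_in_C_AGE: "(\<lambda>i. 0) \<in> C_AGE a k"
  by (simp add: C_AGE_def C_NNS_def Sig_def)

lemma C_AGE_subset_C_SAGE: "C_AGE a k \<subseteq> C_SAGE a"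
proof
  fix c assume c: "c \<in> C_AGE a k"
  have "c = (\<lambda>i. \<Sum>k'\<in>UNIV. (if k' = k then c else (\<lambda>i. 0)) i)"
    by (simp add: if_distrib if_distribR)
  moreover have "(if k' = k then c else (\<lambda>i. 0)) \<in> C_AGE a k'" for k'
    by (cases "k' = k") (simp_all add: c zero_in_C_AGE)
  ultimately show "c \<in> C_SAGE a"
    unfolding C_SAGE_def by (intro CollectI exI[of _ "\<lambda>k'. if k' = k then c else (\<lambda>i. 0)"]) blast
qed

lemma C_SAGE_add:
  assumes "c \<in> C_SAGE a" "d \<in> C_SAGE a"
  shows "(\<lambda>i. c i + d i) \<in> C_SAGE a"
proof -
  from assms obtain cs ds where cs: "\<And>k. cs k \<in> C_AGE a k" "c = (\<lambda>i. \<Sum>k\<in>UNIV. cs k i)"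
    and ds: "\<And>k. ds k \<in> C_AGE a k" "d = (\<lambda>i. \<Sum>k\<in>UNIV. ds k i)"
    unfolding C_SAGE_def by blast
  have "(\<lambda>i. cs k i + ds k i) \<in> C_AGE a k" for k
    using cs(1) ds(1) by (rule C_AGE_add)
  moreover have "(\<lambda>i. c i + d i) = (\<lambda>i. \<Sum>k\<in>UNIV. cs k i + ds k i)"
    by (simp add: cs(2) ds(2) sum.distrib)
  ultimately show ?thesis
    unfolding C_SAGE_def by (intro CollectI exI[of _ "\<lambda>k i. cs k i + ds k i"]) auto
qed

lemma C_SAGE_sum:
  assumes "finite S" "\<And>s. s \<in> S \<Longrightarrow> f s \<in> C_SAGE a"
  shows "(\<lambda>i. \<Sum>s\<in>S. f s i) \<in> C_SAGE a"
  using assms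
proof (induction S rule: finite_induct)
  case empty
  then show ?case using zero_in_C_AGE C_AGE_subset_C_SAGE by fastforce
next
  case (insert s S)
  then show ?case using C_SAGE_add[of "f s" a "\<lambda>i. \<Sum>s\<in>S. f s i"] by simp
qed

lemma C_SAGE_subset_C_NNS: "C_SAGE a \<subseteq> C_NNS a"
proof
  fix c assume "c \<in> C_SAGE a"
  then obtain cs where cs: "\<And>k. cs k \<in> C_AGE a k" and c: "c = (\<lambda>i. \<Sum>k\<in>UNIV. cs k i)"
    unfolding C_SAGE_def by blast
  have "Sig a c x = (\<Sum>k\<in>UNIV. Sig a (cs k) x)" for x
    unfolding c Sig_def sum_distrib_right by (rule sum.swap)
  moreover have "Sig a (cs k) x \<ge> 0" for k x
    using cs[of k] by (simp add: C_AGE_def C_NNS_def)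
  ultimately show "c \<in> C_NNS a"
    by (simp add: C_NNS_def sum_nonneg)
qed

lemma tendsto_exp_mult_neg_at_top:
  assumes "(d::real) < 0"
  shows "((\<lambda>t. exp (t * d)) \<longlongrightarrow> 0) at_top"
proof -
  have "filterlim (\<lambda>t::real. t * d) at_bot at_top"
    using filterlim_tendsto_neg_mult_at_bot[OF tendsto_const assms filterlim_ident]
    by (simp add: mult.commute)
  from filterlim_compose[OF exp_at_bot this] show ?thesis .
qed

lemma face_of_New_exposed:
  fixes a :: "'m::finite \<Rightarrow> real^'n"
  assumes "F face_of New a UNIV"
  obtains w h where "\<And>i. a i \<bullet> w \<le> h" and "\<And>i. a i \<in> F \<longleftrightarrow> a i \<bullet> w = h"
proof -
  have "polyhedron (New a UNIV)"
    unfolding New_def by (intro polytope_imp_polyhedron polytope_convex_hull) simp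
  then have "F exposed_face_of New a UNIV"
    using assms exposed_face_of_polyhedron by blast
  then obtain w h where wh: "New a UNIV \<subseteq> {x. w \<bullet> x \<le> h}" "F = New a UNIV \<inter> {x. w \<bullet> x = h}"
    unfolding exposed_face_of_def by blast
  have inNew: "a i \<in> New a UNIV" for i
    unfolding New_def by (simp add: hull_inc)
  show ?thesis
  proof (rule that)
    show "a i \<bullet> w \<le> h" for i
      using wh(1) inNew[of i] by (auto simp: inner_commute)
    show "a i \<in> F \<longleftrightarrow> a i \<bullet> w = h" for i
      using wh(2) inNew[of i] by (auto simp: inner_commute)
  qed
qed

lemma C_NNS_restrict_face:
  fixes a :: "'m::finite \<Rightarrow> real^'n"
  assumes c: "c \<in> C_NNS a" and F: "F face_of New a UNIV"
  shows "(\<lambda>i. if a i \<in> F then c i else 0) \<in> C_NNS a"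
  unfolding C_NNS_def
proof (intro CollectI allI)
  fix x
  obtain w h where le: "\<And>i. a i \<bullet> w \<le> h" and inF: "\<And>i. a i \<in> F \<longleftrightarrow> a i \<bullet> w = h"
    using face_of_New_exposed[OF F] by blast
  define g where "g t = Sig a c (x + t *\<^sub>R w) * exp (- (t * h))" for t
  have g: "g t = (\<Sum>i\<in>UNIV. c i * exp (a i \<bullet> x) * exp (t * (a i \<bullet> w - h)))" for t
    unfolding g_def Sig_def sum_distrib_right
    by (intro sum.cong refl) (simp add: mult.assoc exp_add[symmetric] inner_add_right algebra_simps)
  have "((\<lambda>t. c i * exp (a i \<bullet> x) * exp (t * (a i \<bullet> w - h)))
          \<longlongrightarrow> (if a i \<in> F then c i else 0) * exp (a i \<bullet> x)) at_top" for i
  proof (cases "a i \<in> F")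
    case False
    then have "a i \<bullet> w - h < 0"
      using inF le[of i] by fastforce
    with False show ?thesis
      using tendsto_mult_right_zero[OF tendsto_exp_mult_neg_at_top] by simp
  qed (use inF in simp)
  then have "(g \<longlongrightarrow> Sig a (\<lambda>i. if a i \<in> F then c i else 0) x) at_top"
    unfolding g Sig_def by (rule tendsto_sum)
  moreover have "\<forall>\<^sub>F t in at_top. 0 \<le> g t"
    using c unfolding C_NNS_def g_def by auto
  ultimately show "0 \<le> Sig a (\<lambda>i. if a i \<in> F then c i else 0) x"
    by (rule tendsto_lowerbound) simp
qed

lemma C_NNS_nonneg_at_extreme_point:
  fixes a :: "'m::finite \<Rightarrow> real^'n"
  assumes inj: "inj a" and c: "c \<in> C_NNS a" and ex: "a j extreme_point_of New a UNIV"
  shows "c j \<ge> 0"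
proof -
  have "(\<lambda>i. if a i \<in> {a j} then c i else 0) \<in> C_NNS a"
    using ex face_of_singleton C_NNS_restrict_face[OF c] by blast
  moreover have "(\<lambda>i. if a i \<in> {a j} then c i else 0) = (\<lambda>i. if i = j then c i else 0)"
    using inj by (auto simp: inj_eq)
  ultimately have "Sig a (\<lambda>i. if i = j then c i else 0) 0 \<ge> 0"
    unfolding C_NNS_def by simp
  moreover have "Sig a (\<lambda>i. if i = j then c i else 0) 0 = c j"
    by (subst Sig_eq_sum_support[where W = "{j}"]) auto
  ultimately show ?thesis by simp
qed

lemma affine_independent_interpolation:
  fixes a :: "'i \<Rightarrow> 'a::euclidean_space"
  assumes inj: "inj_on a V" and ind: "\<not> affine_dependent (a ` V)"
  obtains w s where "\<And>i. i \<in> V \<Longrightarrow> w \<bullet> a i + s = g i"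
proof (cases "V = {}")
  case True
  then show ?thesis using that[of 0 0] by simp
next
  case False
  then obtain i0 where i0: "i0 \<in> V" by blast
  let ?D = "(\<lambda>x. - a i0 + x) ` (a ` V - {a i0})"
  have "\<not> dependent ?D"
    using ind affine_dependent_iff_dependent2[of "a i0" "a ` V"] i0 by simp
  from linear_independent_extend[OF this, of "\<lambda>d. g (inv_into V a (a i0 + d)) - g i0"]
  obtain L where L: "linear L" "\<And>d. d \<in> ?D \<Longrightarrow> L d = g (inv_into V a (a i0 + d)) - g i0"
    by blast
  define w where "w = adjoint L 1"
  have Lw: "L d = w \<bullet> d" for d
    using adjoint_clauses(2)[OF L(1), of 1 d] by (simp add: w_def)
  show ?thesis
  proof (rule that)
    fix i assume i: "i \<in> V"
    show "w \<bullet> a i + (g i0 - w \<bullet> a i0) = g i"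
    proof (cases "a i = a i0")
      case True
      then show ?thesis using inj i i0 by (simp add: inj_on_eq_iff)
    next
      case False
      then have "- a i0 + a i \<in> ?D" using i by blast
      from L(2)[OF this] have "w \<bullet> (- a i0 + a i) = g i - g i0"
        using inv_into_f_f[OF inj i] by (simp add: Lw)
      then show ?thesis by (simp add: inner_diff_right)
    qed
  qed
qed

lemma affine_independent_exp_interpolation:
  fixes a :: "'i \<Rightarrow> 'a::euclidean_space"
  assumes "inj_on a V" "\<not> affine_dependent (a ` V)" "\<And>i. i \<in> V \<Longrightarrow> g i > 0"
  obtains w s where "\<And>i. i \<in> V \<Longrightarrow> g i = exp s * exp (a i \<bullet> w)"
proof -
  obtain w s where ws: "\<And>i. i \<in> V \<Longrightarrow> w \<bullet> a i + s = ln (g i)"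
    using affine_independent_interpolation[OF assms(1,2), where g = "\<lambda>i. ln (g i)"] by blast
  have "g i = exp s * exp (a i \<bullet> w)" if "i \<in> V" for i
  proof -
    have "exp (w \<bullet> a i + s) = g i"
      using ws[OF that] assms(3)[OF that] by simp
    then show ?thesis by (simp add: exp_add inner_commute mult.commute)
  qed
  then show ?thesis by (rule that)
qed

lemma convex_hull_image_weights:
  fixes a :: "'i \<Rightarrow> 'a::real_vector"
  assumes fin: "finite V" and inj: "inj_on a V" and b: "b \<in> convex hull (a ` V)"
  obtains l where "\<And>i. i \<in> V \<Longrightarrow> 0 \<le> l i" "sum l V = 1" "(\<Sum>i\<in>V. l i *\<^sub>R a i) = b"
proof -
  from b obtain u where u: "\<forall>x\<in>a ` V. 0 \<le> u x" "sum u (a ` V) = 1" "(\<Sum>x\<in>a ` V. u x *\<^sub>R x) = b"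
    using convex_hull_finite[of "a ` V"] fin by auto
  show ?thesis
  proof (rule that[of "u \<circ> a"])
    show "\<And>i. i \<in> V \<Longrightarrow> 0 \<le> (u \<circ> a) i" using u(1) by simp
    show "sum (u \<circ> a) V = 1" using u(2) sum.reindex[OF inj, of u] by simp
    show "(\<Sum>i\<in>V. (u \<circ> a) i *\<^sub>R a i) = b"
      using u(3) sum.reindex[OF inj, of "\<lambda>x. u x *\<^sub>R x"] by simp
  qed
qed

definition dominating_coeffs ::
    "('m::finite \<Rightarrow> real^'n) \<Rightarrow> 'm set \<Rightarrow> real \<Rightarrow> real^'n \<Rightarrow> (real^'m) set" where
  "dominating_coeffs a V r b = {z. (\<forall>i. i \<notin> V \<longrightarrow> z$i = 0) \<and> (\<forall>i. i \<in> V \<longrightarrow> 0 \<le> z$i) \<and>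
      (\<forall>x. r * exp (b \<bullet> x) \<le> (\<Sum>i\<in>V. z$i * exp (a i \<bullet> x)))}"

lemma closed_dominating_coeffs: "closed (dominating_coeffs a V r b)"
  unfolding dominating_coeffs_def
  by (intro closed_Collect_conj closed_Collect_all closed_Collect_imp closed_Collect_eq
      closed_Collect_le open_Collect_const continuous_intros continuous_on_component)

lemma convex_dominating_coeffs:
  fixes a :: "'m::finite \<Rightarrow> real^'n"
  shows "convex (dominating_coeffs a V r b)"
  unfolding convex_def
proof (intro ballI allI impI)
  fix z y :: "real^'m" and u v :: real
  assume z: "z \<in> dominating_coeffs a V r b" and y: "y \<in> dominating_coeffs a V r b"
    and uv: "0 \<le> u" "0 \<le> v" "u + v = 1"
  have "r * exp (b \<bullet> x) \<le> (\<Sum>i\<in>V. (u *\<^sub>R z + v *\<^sub>R y) $ i * exp (a i \<bullet> x))" for x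
  proof -
    have "r * exp (b \<bullet> x) = u * (r * exp (b \<bullet> x)) + v * (r * exp (b \<bullet> x))"
      using uv by (simp add: distrib_right[symmetric])
    also have "\<dots> \<le> u * (\<Sum>i\<in>V. z$i * exp (a i \<bullet> x)) + v * (\<Sum>i\<in>V. y$i * exp (a i \<bullet> x))"
      using z y uv by (intro add_mono mult_left_mono) (auto simp: dominating_coeffs_def)
    also have "\<dots> = (\<Sum>i\<in>V. (u *\<^sub>R z + v *\<^sub>R y) $ i * exp (a i \<bullet> x))"
      by (simp add: sum_distrib_left sum.distrib algebra_simps)
    finally show ?thesis .
  qed
  then show "u *\<^sub>R z + v *\<^sub>R y \<in> dominating_coeffs a V r b"
    using z y uv by (simp add: dominating_coeffs_def)
qed

lemma dominating_coeffs_nonneg: "z \<in> dominating_coeffs a V r b \<Longrightarrow> 0 \<le> z $ i"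
  by (cases "i \<in> V") (auto simp: dominating_coeffs_def)

lemma dominating_coeffs_add_axis:
  assumes z: "z \<in> dominating_coeffs a V r b" and i: "i \<in> V" and t: "t \<ge> 0"
  shows "z + t *\<^sub>R axis i 1 \<in> dominating_coeffs a V r b"
proof -
  have "(z + t *\<^sub>R axis i 1) $ j * exp (a j \<bullet> x)
          = z $ j * exp (a j \<bullet> x) + (if j = i then t * exp (a i \<bullet> x) else 0)" for j x
    by (simp add: axis_def distrib_right)
  then have "(\<Sum>j\<in>V. (z + t *\<^sub>R axis i 1) $ j * exp (a j \<bullet> x)) =
        (\<Sum>j\<in>V. z $ j * exp (a j \<bullet> x)) + t * exp (a i \<bullet> x)" for x
    using i by (simp add: sum.distrib)
  then show ?thesis
    using z i t by (auto simp: dominating_coeffs_def axis_def intro: add_increasing2)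
qed

(* For convex weights l of b, weighted AM-GM makes these coefficients dominate r * exp (b \<bullet> x),
   with equality at x = x0. *)
definition tangent_coeffs ::
    "('m::finite \<Rightarrow> real^'n) \<Rightarrow> 'm set \<Rightarrow> ('m \<Rightarrow> real) \<Rightarrow> real \<Rightarrow> real^'n \<Rightarrow> real^'n \<Rightarrow> real^'m"
  where "tangent_coeffs a V l r b x0 = (\<chi> i. if i \<in> V then l i * r * exp ((b - a i) \<bullet> x0) else 0)"

lemma tangent_coeffs_dominating:
  fixes a :: "'m::finite \<Rightarrow> real^'n"
  assumes ne: "V \<noteq> {}" and l0: "\<And>i. i \<in> V \<Longrightarrow> l i \<ge> 0" and l1: "sum l V = 1"
    and b: "(\<Sum>i\<in>V. l i *\<^sub>R a i) = b" and r: "r \<ge> 0"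
  shows "tangent_coeffs a V l r b x0 \<in> dominating_coeffs a V r b"
proof -
  have "r * exp (b \<bullet> x) \<le> (\<Sum>i\<in>V. tangent_coeffs a V l r b x0 $ i * exp (a i \<bullet> x))" for x
  proof -
    have "(\<Sum>i\<in>V. l i *\<^sub>R ((b - a i) \<bullet> x0 + a i \<bullet> x))
            = (\<Sum>i\<in>V. l i) * (b \<bullet> x0) - (\<Sum>i\<in>V. l i *\<^sub>R a i) \<bullet> x0 + (\<Sum>i\<in>V. l i *\<^sub>R a i) \<bullet> x"
      by (simp add: inner_sum_left sum_distrib_right sum.distrib sum_subtractf algebra_simps
          inner_diff_left)
    then have "(\<Sum>i\<in>V. l i *\<^sub>R ((b - a i) \<bullet> x0 + a i \<bullet> x)) = b \<bullet> x"
      using l1 b by simp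
    then have "exp (b \<bullet> x) \<le> (\<Sum>i\<in>V. l i * exp ((b - a i) \<bullet> x0 + a i \<bullet> x))"
      using convex_on_sum[OF _ ne exp_convex l1 l0, of "\<lambda>i. (b - a i) \<bullet> x0 + a i \<bullet> x"] by simp
    from mult_left_mono[OF this r] show ?thesis
      unfolding exp_add by (simp add: tangent_coeffs_def sum_distrib_left algebra_simps)
  qed
  then show ?thesis
    using l0 r by (simp add: dominating_coeffs_def tangent_coeffs_def)
qed

lemma tangent_coeffs_tight:
  assumes "sum l V = 1"
  shows "(\<Sum>i\<in>V. tangent_coeffs a V l r b x0 $ i * exp (a i \<bullet> x0)) = r * exp (b \<bullet> x0)"
proof -
  have "tangent_coeffs a V l r b x0 $ i * exp (a i \<bullet> x0) = l i * (r * exp (b \<bullet> x0))" if "i \<in> V" for i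
    using that by (simp add: tangent_coeffs_def exp_diff inner_diff_left)
  then show ?thesis
    using assms by (simp add: sum_distrib_right[symmetric])
qed

lemma closed_sums_nonneg:
  fixes S T :: "(real^'m) set"
  assumes S: "closed S" "\<And>z i. z \<in> S \<Longrightarrow> 0 \<le> z $ i"
    and T: "closed T" "\<And>z i. z \<in> T \<Longrightarrow> 0 \<le> z $ i"
  shows "closed (\<Union>u\<in>S. \<Union>v\<in>T. {u + v})"
  unfolding closed_sequential_limits
proof (intro allI impI, elim conjE)
  fix s l assume sST: "\<forall>n. s n \<in> (\<Union>u\<in>S. \<Union>v\<in>T. {u + v})" and lim: "s \<longlonglongrightarrow> l"
  from sST have "\<forall>n. \<exists>uv. fst uv \<in> S \<and> snd uv \<in> T \<and> s n = fst uv + snd uv"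
    by force
  from choice[OF this] obtain uv
    where "\<forall>n. fst (uv n) \<in> S \<and> snd (uv n) \<in> T \<and> s n = fst (uv n) + snd (uv n)"
    by blast
  then obtain u v where u: "\<And>n. u n \<in> S" and v: "\<And>n. v n \<in> T" and suv: "\<And>n. s n = u n + v n"
    by (intro that[of "fst \<circ> uv" "snd \<circ> uv"]) auto
  obtain B where B: "\<And>n. norm (s n) \<le> B"
    using convergent_imp_Bseq[OF convergentI[OF lim]] unfolding Bseq_def by auto
  have "u n \<in> cbox 0 (\<chi> i. B)" for n
    unfolding mem_box_cart
  proof
    fix i
    have "u n $ i \<le> s n $ i" using suv[of n] T(2)[OF v] by simp
    also have "\<dots> \<le> B" using component_le_norm_cart[of "s n" i] B[of n] by simp
    finally show "0 $ i \<le> u n $ i \<and> u n $ i \<le> (\<chi> i. B) $ i" using S(2)[OF u] by simp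
  qed
  then obtain ul r where r: "strict_mono (r :: nat \<Rightarrow> nat)" and ul: "(u \<circ> r) \<longlonglongrightarrow> ul"
    using seq_compactE[OF compact_imp_seq_compact[OF compact_cbox]] by metis
  have "ul \<in> S"
    using S(1) ul u unfolding closed_sequential_limits by (metis comp_apply)
  moreover have "(v \<circ> r) \<longlonglongrightarrow> l - ul"
    using tendsto_diff[OF LIMSEQ_subseq_LIMSEQ[OF lim r] ul] by (simp add: o_def suv)
  then have "l - ul \<in> T"
    using T(1) v unfolding closed_sequential_limits by (metis comp_apply)
  ultimately show "l \<in> (\<Union>u\<in>S. \<Union>v\<in>T. {u + v})" by force
qed

lemma separating_functional_nonneg:
  fixes y z :: "real^'m"
  assumes z: "z \<in> T" and up: "\<And>t. t \<ge> 0 \<Longrightarrow> z + t *\<^sub>R axis i 1 \<in> T"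
    and sep: "\<And>z. z \<in> T \<Longrightarrow> b < y \<bullet> z"
  shows "0 \<le> y $ i"
proof (rule ccontr)
  assume neg: "\<not> 0 \<le> y $ i"
  define t where "t = (\<bar>y \<bullet> z\<bar> + \<bar>b\<bar> + 1) / (- (y $ i))"
  have "t \<ge> 0"
    using neg unfolding t_def by (intro divide_nonneg_pos) auto
  then have "b < y \<bullet> z + t * y $ i"
    using sep[OF up] by (simp add: inner_add_right inner_axis)
  moreover have "t * y $ i = - (\<bar>y \<bullet> z\<bar> + \<bar>b\<bar> + 1)"
    using neg by (simp add: t_def)
  ultimately show False by linarith
qed

lemma inner_eq_sum_support:
  fixes y z :: "real^'m::finite"
  assumes "\<And>i. i \<notin> V \<Longrightarrow> z $ i = 0"
  shows "y \<bullet> z = (\<Sum>i\<in>V. y $ i * z $ i)"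
  unfolding inner_vec_def inner_real_def by (rule sum.mono_neutral_right) (use assms in auto)

lemma tangent_bound_imp_inner_bound:
  fixes a :: "'m::finite \<Rightarrow> real^'n"
  assumes inj: "inj_on a V" and ind: "\<not> affine_dependent (a ` V)"
    and l: "\<And>i. i \<in> V \<Longrightarrow> 0 \<le> l i" "sum l V = 1" "(\<Sum>i\<in>V. l i *\<^sub>R a i) = a p"
    and m: "\<And>i. i \<in> V \<Longrightarrow> 0 \<le> m i" "sum m V = 1" "(\<Sum>i\<in>V. m i *\<^sub>R a i) = a q"
    and \<alpha>: "\<alpha> \<ge> 0" and \<beta>: "\<beta> \<ge> 0" and cV: "\<And>i. i \<in> V \<Longrightarrow> c i \<ge> 0"
    and dom: "\<And>x. \<alpha> * exp (a p \<bullet> x) + \<beta> * exp (a q \<bullet> x) \<le> (\<Sum>i\<in>V. c i * exp (a i \<bullet> x))"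
    and y0: "\<And>i. i \<in> V \<Longrightarrow> 0 \<le> y $ i"
    and sep: "\<And>x. b < y \<bullet> (tangent_coeffs a V l \<alpha> (a p) x + tangent_coeffs a V m \<beta> (a q) x)"
  shows "b \<le> y \<bullet> (\<chi> i. if i \<in> V then c i else 0)"
proof (rule ccontr)
  define cv :: "real^'m" where "cv = (\<chi> i. if i \<in> V then c i else 0)"
  define z where "z x = tangent_coeffs a V l \<alpha> (a p) x + tangent_coeffs a V m \<beta> (a q) x" for x
  assume "\<not> b \<le> y \<bullet> (\<chi> i. if i \<in> V then c i else 0)"
  then have yb: "y \<bullet> cv < b" by (simp add: cv_def)
  define \<epsilon> where "\<epsilon> = (b - y \<bullet> cv) / (sum c V + 1)"
  have "sum c V \<ge> 0" using cV by (simp add: sum_nonneg)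
  then have \<epsilon>: "\<epsilon> > 0" "y \<bullet> cv + \<epsilon> * sum c V < b"
    using yb by (simp_all add: \<epsilon>_def field_simps)
  have "y $ i + \<epsilon> > 0" if "i \<in> V" for i
    using y0[OF that] \<epsilon>(1) by linarith
  then obtain w s where ws: "\<And>i. i \<in> V \<Longrightarrow> y $ i + \<epsilon> = exp s * exp (a i \<bullet> w)"
    using affine_independent_exp_interpolation[OF inj ind, where g = "\<lambda>i. y $ i + \<epsilon>"] by blast
  have "V \<noteq> {}" using l(2) by auto
  then have znn: "0 \<le> z x $ i" for x i
    using dominating_coeffs_nonneg[OF tangent_coeffs_dominating[OF _ l \<alpha>]]
      dominating_coeffs_nonneg[OF tangent_coeffs_dominating[OF _ m \<beta>]] by (simp add: z_def)
  text \<open>Up to \<open>\<epsilon>\<close>, y is the vector of exponentials at w, where the tangent coefficients are tight.\<close>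
  have "b < y \<bullet> z w" unfolding z_def by (rule sep)
  also have "\<dots> = (\<Sum>i\<in>V. y $ i * z w $ i)"
    by (rule inner_eq_sum_support) (simp add: z_def tangent_coeffs_def)
  also have "\<dots> \<le> (\<Sum>i\<in>V. (y $ i + \<epsilon>) * z w $ i)"
    using znn \<epsilon>(1) by (intro sum_mono mult_right_mono) auto
  also have "\<dots> = exp s * (\<Sum>i\<in>V. z w $ i * exp (a i \<bullet> w))"
    unfolding sum_distrib_left by (intro sum.cong refl) (simp add: ws mult_ac)
  also have "\<dots> = exp s * (\<alpha> * exp (a p \<bullet> w) + \<beta> * exp (a q \<bullet> w))"
    by (simp add: z_def distrib_right sum.distrib tangent_coeffs_tight l(2) m(2))
  also have "\<dots> \<le> exp s * (\<Sum>i\<in>V. c i * exp (a i \<bullet> w))"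
    using dom by simp
  also have "\<dots> = (\<Sum>i\<in>V. (y $ i + \<epsilon>) * c i)"
    unfolding sum_distrib_left by (intro sum.cong refl) (simp add: ws mult_ac)
  also have "\<dots> = (\<Sum>i\<in>V. y $ i * c i) + \<epsilon> * sum c V"
    by (simp add: distrib_right sum.distrib sum_distrib_left)
  also have "\<dots> = y \<bullet> cv + \<epsilon> * sum c V"
    by (subst inner_eq_sum_support[of V]) (auto simp: cv_def)
  finally show False using \<epsilon>(2) by simp
qed

lemma two_negative_terms_dominated:
  fixes a :: "'m::finite \<Rightarrow> real^'n"
  assumes inj: "inj_on a V" and ind: "\<not> affine_dependent (a ` V)"
    and hp: "a p \<in> convex hull (a ` V)" and hq: "a q \<in> convex hull (a ` V)"
    and cV: "\<And>i. i \<in> V \<Longrightarrow> c i \<ge> 0" and \<alpha>: "\<alpha> \<ge> 0" and \<beta>: "\<beta> \<ge> 0"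
    and dom: "\<And>x. \<alpha> * exp (a p \<bullet> x) + \<beta> * exp (a q \<bullet> x) \<le> (\<Sum>i\<in>V. c i * exp (a i \<bullet> x))"
  shows "(\<chi> i. if i \<in> V then c i else 0)
           \<in> (\<Union>u\<in>dominating_coeffs a V \<alpha> (a p). \<Union>v\<in>dominating_coeffs a V \<beta> (a q). {u + v})"
    (is "?cv \<in> ?T")
proof -
  define T where "T = ?T"
  have finV: "finite V" by simp
  obtain l where l: "\<And>i. i \<in> V \<Longrightarrow> 0 \<le> l i" "sum l V = 1" "(\<Sum>i\<in>V. l i *\<^sub>R a i) = a p"
    using convex_hull_image_weights[OF finV inj hp] by blast
  obtain m where m: "\<And>i. i \<in> V \<Longrightarrow> 0 \<le> m i" "sum m V = 1" "(\<Sum>i\<in>V. m i *\<^sub>R a i) = a q"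
    using convex_hull_image_weights[OF finV inj hq] by blast
  have ne: "V \<noteq> {}" using l(2) by auto
  define z where "z x = tangent_coeffs a V l \<alpha> (a p) x + tangent_coeffs a V m \<beta> (a q) x" for x
  have zT: "z x \<in> T" for x
    unfolding z_def T_def
    using tangent_coeffs_dominating[OF ne l \<alpha>] tangent_coeffs_dominating[OF ne m \<beta>] by blast
  have "?cv \<in> T"
  proof (rule ccontr)
    assume notin: "?cv \<notin> T"
    have "convex T"
      unfolding T_def by (intro convex_sums convex_dominating_coeffs)
    moreover have "closed T"
      unfolding T_def
      by (rule closed_sums_nonneg[OF closed_dominating_coeffs _ closed_dominating_coeffs])
        (simp_all add: dominating_coeffs_nonneg)
    ultimately have "\<exists>y b. y \<bullet> ?cv < b \<and> (\<forall>z\<in>T. b < y \<bullet> z)"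
      using separating_hyperplane_closed_point notin by blast
    then obtain y b where yb: "y \<bullet> ?cv < b" and sep: "\<And>z. z \<in> T \<Longrightarrow> b < y \<bullet> z"
      by blast
    have y0: "0 \<le> y $ i" if "i \<in> V" for i
    proof (rule separating_functional_nonneg[OF zT _ sep])
      fix t :: real assume "t \<ge> 0"
      have "z 0 + t *\<^sub>R axis i 1
              = (tangent_coeffs a V l \<alpha> (a p) 0 + t *\<^sub>R axis i 1) + tangent_coeffs a V m \<beta> (a q) 0"
        by (simp add: z_def algebra_simps)
      then show "z 0 + t *\<^sub>R axis i 1 \<in> T"
        unfolding T_def
        using dominating_coeffs_add_axis[OF tangent_coeffs_dominating[OF ne l \<alpha>] \<open>i \<in> V\<close> \<open>t \<ge> 0\<close>]
          tangent_coeffs_dominating[OF ne m \<beta>] by blast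
    qed
    have "b < y \<bullet> (tangent_coeffs a V l \<alpha> (a p) x + tangent_coeffs a V m \<beta> (a q) x)" for x
      using sep[OF zT[of x]] by (simp add: z_def)
    from tangent_bound_imp_inner_bound[OF inj ind l m \<alpha> \<beta> cV dom y0 this] yb
    show False by simp
  qed
  then show ?thesis by (simp add: T_def)
qed

lemma dominating_coeffs_C_AGE:
  fixes a :: "'m::finite \<Rightarrow> real^'n"
  assumes u: "u \<in> dominating_coeffs a V (- c p) (a p)" and p: "p \<notin> V"
  shows "(\<lambda>i. if i = p then c p else u $ i) \<in> C_AGE a p"
proof -
  let ?c = "\<lambda>i. if i = p then c p else u $ i"
  have Sig_c: "Sig a ?c x = c p * exp (a p \<bullet> x) + (\<Sum>i\<in>V. u $ i * exp (a i \<bullet> x))" for x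
  proof -
    have "Sig a ?c x = (\<Sum>i\<in>insert p V. ?c i * exp (a i \<bullet> x))"
      using u by (intro Sig_eq_sum_support) (simp add: dominating_coeffs_def)
    moreover have "(\<Sum>i\<in>V. ?c i * exp (a i \<bullet> x)) = (\<Sum>i\<in>V. u $ i * exp (a i \<bullet> x))"
      by (rule sum.cong) (use p in auto)
    ultimately show ?thesis using p by simp
  qed
  have dom: "- (c p * exp (a p \<bullet> x)) \<le> (\<Sum>i\<in>V. u $ i * exp (a i \<bullet> x))" for x
    using u by (simp add: dominating_coeffs_def)
  have "0 \<le> Sig a ?c x" for x
    using dom[of x] unfolding Sig_c by linarith
  then show ?thesis
    using dominating_coeffs_nonneg[OF u] by (simp add: C_AGE_def C_NNS_def)
qed

lemma C_SAGE_two_negative_terms: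
  fixes a :: "'m::finite \<Rightarrow> real^'n"
  assumes V: "p \<notin> V" "q \<notin> V" "p \<noteq> q"
    and inj: "inj_on a V" and ind: "\<not> affine_dependent (a ` V)"
    and hp: "a p \<in> convex hull (a ` V)" and hq: "a q \<in> convex hull (a ` V)"
    and c: "c \<in> C_NNS a" and zero: "\<And>i. i \<notin> insert p (insert q V) \<Longrightarrow> c i = 0"
    and cV: "\<And>i. i \<in> V \<Longrightarrow> c i \<ge> 0" and cpq: "c p \<le> 0" "c q \<le> 0"
  shows "c \<in> C_SAGE a"
proof -
  have dom: "- c p * exp (a p \<bullet> x) + - c q * exp (a q \<bullet> x) \<le> (\<Sum>i\<in>V. c i * exp (a i \<bullet> x))" for x
  proof -
    have "Sig a c x = (\<Sum>i\<in>insert p (insert q V). c i * exp (a i \<bullet> x))"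
      using zero by (rule Sig_eq_sum_support)
    moreover have "0 \<le> Sig a c x"
      using c by (simp add: C_NNS_def)
    ultimately show ?thesis using V by simp
  qed
  have "0 \<le> - c p" "0 \<le> - c q" using cpq by simp_all
  from two_negative_terms_dominated[OF inj ind hp hq cV this dom]
  obtain u v where u: "u \<in> dominating_coeffs a V (- c p) (a p)"
    and v: "v \<in> dominating_coeffs a V (- c q) (a q)"
    and uv: "(\<chi> i. if i \<in> V then c i else 0) = u + v"
    by blast
  have c_split: "c = (\<lambda>i. (if i = p then c p else u $ i) + (if i = q then c q else v $ i))"
  proof
    fix i
    have "c i = u $ i + v $ i" if "i \<in> V"
      using that arg_cong[OF uv, of "\<lambda>z. z $ i"] by simp
    moreover have "u $ i = 0 \<and> v $ i = 0" if "i \<notin> V"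
      using that u v by (simp add: dominating_coeffs_def)
    ultimately show "c i = (if i = p then c p else u $ i) + (if i = q then c q else v $ i)"
      using V zero[of i] by (cases "i \<in> V") auto
  qed
  have "(\<lambda>i. if i = p then c p else u $ i) \<in> C_SAGE a"
    using dominating_coeffs_C_AGE[where c = c, OF u V(1)] C_AGE_subset_C_SAGE by blast
  moreover have "(\<lambda>i. if i = q then c q else v $ i) \<in> C_SAGE a"
    using dominating_coeffs_C_AGE[where c = c, OF v V(2)] C_AGE_subset_C_SAGE by blast
  ultimately show ?thesis
    by (subst c_split) (rule C_SAGE_add)
qed

lemma extreme_points_New:
  "{v. v extreme_point_of New a B} = a ` (B - nonextreme_cols a B)"
  unfolding nonextreme_cols_def New_def
  using extreme_point_of_convex_hull[of _ "a ` B"] by blast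

lemma New_eq_convex_hull_extreme_cols:
  fixes a :: "'m::finite \<Rightarrow> real^'n"
  shows "New a B = convex hull (a ` (B - nonextreme_cols a B))"
proof -
  have "compact (New a B)" "convex (New a B)"
    unfolding New_def by (simp_all add: compact_convex_hull finite_imp_compact)
  then show ?thesis
    using Krein_Milman_Minkowski extreme_points_New by metis
qed

lemma C_NNS_negative_coeff_nonextreme:
  fixes a :: "'m::finite \<Rightarrow> real^'n"
  assumes inj: "inj a" and face: "New a B face_of New a UNIV" and c: "c \<in> C_NNS a"
    and zero: "\<And>i. i \<notin> B \<Longrightarrow> c i = 0" and neg: "c j < 0"
  shows "j \<in> nonextreme_cols a B"
proof -
  have "j \<in> B" using zero neg by force
  moreover have "\<not> a j extreme_point_of New a B"
  proof
    assume "a j extreme_point_of New a B"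
    then have "a j extreme_point_of New a UNIV"
      using face_of_trans[OF _ face] face_of_singleton by blast
    then show False
      using C_NNS_nonneg_at_extreme_point[OF inj c] neg by fastforce
  qed
  ultimately show ?thesis by (simp add: nonextreme_cols_def)
qed

lemma C_NNS_simplex_block_in_C_SAGE:
  fixes a :: "'m::finite \<Rightarrow> real^'n"
  assumes inj: "inj a" and indep: "\<not> affine_dependent {v. v extreme_point_of New a B}"
    and pq: "nonextreme_cols a B = {p, q}" "p \<noteq> q"
    and c: "c \<in> C_NNS a" and zero: "\<And>i. i \<notin> B \<Longrightarrow> c i = 0"
    and neg: "\<And>j. c j < 0 \<longleftrightarrow> j = p \<or> j = q"
  shows "c \<in> C_SAGE a"
proof -
  define V where "V = B - {p, q}"
  have pqB: "p \<in> B" "q \<in> B"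
    using pq(1) by (auto simp: nonextreme_cols_def)
  have hull: "New a B = convex hull (a ` V)"
    unfolding V_def using New_eq_convex_hull_extreme_cols[of a B] unfolding pq(1) .
  show ?thesis
  proof (rule C_SAGE_two_negative_terms[where V = V])
    show "p \<notin> V" "q \<notin> V" "p \<noteq> q" using pq(2) by (auto simp: V_def)
    show "inj_on a V" by (rule inj_on_subset[OF inj]) simp
    show "\<not> affine_dependent (a ` V)"
      using indep unfolding V_def extreme_points_New pq(1) .
    show "a p \<in> convex hull (a ` V)" "a q \<in> convex hull (a ` V)"
      using pqB unfolding hull[symmetric] New_def by (simp_all add: hull_inc)
    show "c i = 0" if "i \<notin> insert p (insert q V)" for i
      using that by (intro zero) (auto simp: V_def)
    show "c i \<ge> 0" if "i \<in> V" for i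
      using that neg[of i] by (auto simp: V_def)
    show "c p \<le> 0" "c q \<le> 0"
      using neg[of p] neg[of q] by simp_all
  qed (rule c)
qed

lemma C_NNS_block_in_C_SAGE:
  fixes a :: "'m::finite \<Rightarrow> real^'n"
  assumes inj: "inj a" and face: "New a B face_of New a UNIV"
    and cond1: "\<not> affine_dependent {v. v extreme_point_of New a B} \<Longrightarrow> card (nonextreme_cols a B) \<le> 2"
    and cond2: "affine_dependent {v. v extreme_point_of New a B} \<Longrightarrow> card (nonextreme_cols a B) \<le> 1"
    and c: "c \<in> C_NNS a" and zero: "\<And>i. i \<notin> B \<Longrightarrow> c i = 0"
  shows "c \<in> C_SAGE a"
proof (cases "\<exists>k. {j. c j < 0} \<subseteq> {k}")
  case True
  then obtain k where k: "{j. c j < 0} \<subseteq> {k}" by blast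
  have "0 \<le> c i" if "i \<noteq> k" for i
    using subsetD[OF k, of i] that by fastforce
  then have "c \<in> C_AGE a k"
    using c by (simp add: C_AGE_def)
  then show ?thesis using C_AGE_subset_C_SAGE by blast
next
  case multiple: False
  define N where "N = {j. c j < 0}"
  have N: "N \<subseteq> nonextreme_cols a B"
    using C_NNS_negative_coeff_nonextreme[OF inj face c zero] by (auto simp: N_def)
  have two_le: "2 \<le> card N"
  proof (rule ccontr)
    assume "\<not> 2 \<le> card N"
    then have single: "\<forall>x\<in>N. \<forall>y\<in>N. x = y" using card_le_Suc0_iff_eq[of N] by simp
    have "\<exists>k. N \<subseteq> {k}"
    proof (cases "N = {}")
      case False
      then obtain k where "k \<in> N" by blast
      with single show ?thesis by blast
    qed simp
    with multiple show False unfolding N_def by blast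
  qed
  have le: "card N \<le> card (nonextreme_cols a B)"
    using N by (simp add: card_mono)
  have indep: "\<not> affine_dependent {v. v extreme_point_of New a B}"
  proof
    assume "affine_dependent {v. v extreme_point_of New a B}"
    from cond2[OF this] two_le le show False by linarith
  qed
  have card_eq: "card N = card (nonextreme_cols a B)" "card N = 2"
    using cond1[OF indep] two_le le by linarith+
  then have "N = nonextreme_cols a B"
    using card_subset_eq[OF _ N] by simp
  moreover obtain p q where "N = {p, q}" "p \<noteq> q"
    using card_eq(2) unfolding card_2_iff by blast
  moreover have "c j < 0 \<longleftrightarrow> j \<in> N" for j
    by (simp add: N_def)
  ultimately have pq: "nonextreme_cols a B = {p, q}" "p \<noteq> q"
    and neg: "\<And>j. c j < 0 \<longleftrightarrow> j = p \<or> j = q"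
    by auto
  show ?thesis
    by (rule C_NNS_simplex_block_in_C_SAGE[OF inj indep pq c zero neg])
qed

lemma partition_on_sum_restrict:
  assumes "partition_on UNIV P" "finite P"
  shows "(\<lambda>i. \<Sum>B\<in>P. if i \<in> B then f i else 0) = f"
proof
  fix i
  have "i \<in> \<Union>P"
    using partition_onD1[OF assms(1)] by simp
  then obtain B0 where B0: "B0 \<in> P" "i \<in> B0" by blast
  have "(\<Sum>B\<in>P. if i \<in> B then f i else 0) = (\<Sum>B\<in>P. if B = B0 then f i else 0)"
    using assms(1) B0 by (intro sum.cong refl) (auto simp: partition_on_def disjoint_def)
  then show "(\<Sum>B\<in>P. if i \<in> B then f i else 0) = f i"
    using B0 assms(2) by simp
qed

lemma New_partition_column_iff:
  assumes part: "partition_on UNIV P"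
    and disj: "\<And>B B'. B \<in> P \<Longrightarrow> B' \<in> P \<Longrightarrow> B \<noteq> B' \<Longrightarrow> New a B \<inter> New a B' = {}"
    and B: "B \<in> P"
  shows "a i \<in> New a B \<longleftrightarrow> i \<in> B"
proof
  have col: "a i \<in> New a B'" if "i \<in> B'" for B'
    using that unfolding New_def by (simp add: hull_inc)
  show "i \<in> B \<Longrightarrow> a i \<in> New a B" by (rule col)
  assume "a i \<in> New a B"
  moreover have "i \<in> \<Union>P"
    using partition_onD1[OF part] by simp
  then obtain B' where "B' \<in> P" "i \<in> B'" by blast
  ultimately show "i \<in> B"
    using disj[OF B] col by blast
qed

theorem mainTheorem10:
  fixes a :: "'m::finite \<Rightarrow> real^'n" and P :: "'m set set"
  assumes distinct_cols: "inj a"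
    and part: "partition_on UNIV P"
    and faces: "\<And>B. B \<in> P \<Longrightarrow> New a B face_of New a UNIV"
    and disj: "\<And>B B'. B \<in> P \<Longrightarrow> B' \<in> P \<Longrightarrow> B \<noteq> B' \<Longrightarrow> New a B \<inter> New a B' = {}"
    and cond1: "\<And>B. B \<in> P \<Longrightarrow> \<not> affine_dependent {v. v extreme_point_of New a B}
                  \<Longrightarrow> card (nonextreme_cols a B) \<le> 2"
    and cond2: "\<And>B. B \<in> P \<Longrightarrow> affine_dependent {v. v extreme_point_of New a B}
                  \<Longrightarrow> card (nonextreme_cols a B) \<le> 1"
  shows "C_SAGE a = C_NNS a"
proof
  show "C_SAGE a \<subseteq> C_NNS a" by (rule C_SAGE_subset_C_NNS)
  show "C_NNS a \<subseteq> C_SAGE a"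
  proof
    fix c assume c: "c \<in> C_NNS a"
    have "(\<lambda>i. if i \<in> B then c i else 0) \<in> C_SAGE a" if B: "B \<in> P" for B
    proof (rule C_NNS_block_in_C_SAGE[OF distinct_cols faces[OF B] cond1[OF B] cond2[OF B]])
      show "(\<lambda>i. if i \<in> B then c i else 0) \<in> C_NNS a"
        using C_NNS_restrict_face[OF c faces[OF B]] New_partition_column_iff[OF part disj B]
        by simp
    next
      fix i assume "i \<notin> B"
      then show "(if i \<in> B then c i else 0) = 0" by simp
    qed
    then have "(\<lambda>i. \<Sum>B\<in>P. if i \<in> B then c i else 0) \<in> C_SAGE a"
      by (intro C_SAGE_sum) auto
    moreover have "(\<lambda>i. \<Sum>B\<in>P. if i \<in> B then c i else 0) = c"
      by (rule partition_on_sum_restrict[OF part]) simp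
    ultimately show "c \<in> C_SAGE a" by simp
  qed
qed

end
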